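(* Let $L$ be a subspace of $\bigwedge^{k}V$, let $I\subseteq[n]$ be nonempty, and let $a=\min I$. Suppose $N_{j\to i}L=L$ for all $i<j$ with $i,j\in I$. Then $L$ has a basis consisting of elements of the form $x\wedge y$, where $x$ is a homogeneous form in $\bigwedge V^{(I\setminus\{a\})}$ and $y$ is a monomial whose variable set is a subset of $\{e_h:h\in I\}$.
   Context: $\mathbb{F}$ is a field (assumed throughout the paper, for expository purposes, to have characteristic not $2$), $V$ is an $n$-dimensional $\mathbb{F}$-vector space with a fixed basis $e_1,\dots,e_n$, and $\bigwedge V$ its exterior algebra; for $S=\{s_1<\cdots<s_r\}\subseteq[n]$, the monomial $e_S=e_{s_1}\wedge\cdots\wedge e_{s_r}$ has variable set $\{e_s:s\in S\}$, and the monomials with $|S|=k$ form a basis of $\bigwedge^kV$. For $J\subseteq[n]$, $V^{(J)}$ is the span of $\{e_h:h\notin J\}$ (so $V^{(I\setminus\{a\})}$ is spanned by $e_a$ and the $e_h$ with $h\notin I$), $V^{(j)}=V^{(\{j\})}$, and $\bigwedge V^{(J)}$ is viewed as a subalgebra of $\bigwedge V$. Slow shift: for distinct $i,j\in[n]$ and nonzero $m\in\bigwedge^kV$, write uniquely $m=x'+e_j\wedge y'$ with $x'\in\bigwedge^kV^{(j)}$, $y'\in\bigwedge^{k-1}V^{(j)}$, and set $N_{j\to i}m=x'+e_i\wedge y'$ if this is nonzero, and $N_{j\to i}m=e_j\wedge y'$ otherwise (the limit as $t\to0$ of the projective action of $e_j\mapsto e_i+te_j$ fixing the other $e_h$). For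 a subspace $L$, $N_{j\to i}L$ is the span of $\{N_{j\to i}m:m\in L\setminus\{0\}\}$. *)

theory Defs
  imports Main "HOL.Vector_Spaces" "HOL-Library.Function_Algebras"
begin

text \<open>Elements of the exterior algebra of V = F^n (basis e_1..e_n) are represented by their
coefficient functions  S \<mapsto> coefficient of e_S,  for S a subset of {1..n}.\<close>

type_synonym 'a ext = "nat set \<Rightarrow> 'a"

definition escale :: "'a::field \<Rightarrow> 'a ext \<Rightarrow> 'a ext" where
  "escale c f = (\<lambda>S. c * f S)"

text \<open>the whole exterior algebra of V^(J): coefficients supported on subsets of [n] - J\<close>
definition ext_alg :: "nat \<Rightarrow> nat set \<Rightarrow> ('a::field) ext set" where
  "ext_alg n J = {f. \<forall>S. f S \<noteq> 0 \<longrightarrow> S \<subseteq> {1..n} - J}"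

definition ext_deg :: "nat \<Rightarrow> nat set \<Rightarrow> nat \<Rightarrow> ('a::field) ext set" where
  "ext_deg n J k = {f. \<forall>S. f S \<noteq> 0 \<longrightarrow> S \<subseteq> {1..n} - J \<and> card S = k}"

definition emono :: "nat set \<Rightarrow> ('a::field) ext" where
  "emono S = (\<lambda>T. if T = S then 1 else 0)"

text \<open>sign with e_S \<and> e_T = sgn S T e_(S \<union> T) for disjoint S, T\<close>
definition wsign :: "nat set \<Rightarrow> nat set \<Rightarrow> 'a::field" where
  "wsign S T = (-1) ^ card {(s, t). s \<in> S \<and> t \<in> T \<and> t < s}"

definition wedge :: "('a::field) ext \<Rightarrow> 'a ext \<Rightarrow> 'a ext" where
  "wedge x y = (\<lambda>U. if finite U then (\<Sum>S\<in>Pow U. wsign S (U - S) * x S * y (U - S)) else 0)"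

text \<open>unique decomposition m = x' + e_j \<and> y' with x', y' in the exterior algebra of V^(j)\<close>
definition slow_split :: "nat \<Rightarrow> nat \<Rightarrow> ('a::field) ext \<Rightarrow> 'a ext \<times> 'a ext" where
  "slow_split n j m = (THE (x', y'). x' \<in> ext_alg n {j} \<and> y' \<in> ext_alg n {j} \<and>
                          m = x' + wedge (emono {j}) y')"

definition slow_shift :: "nat \<Rightarrow> nat \<Rightarrow> nat \<Rightarrow> ('a::field) ext \<Rightarrow> 'a ext" where
  "slow_shift n j i m = (let (x', y') = slow_split n j m in
     if x' + wedge (emono {i}) y' \<noteq> 0 then x' + wedge (emono {i}) y'
     else wedge (emono {j}) y')"

definition slow_shift_space :: "nat \<Rightarrow> nat \<Rightarrow> nat \<Rightarrow> ('a::field) ext set \<Rightarrow> 'a ext set" where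
  "slow_shift_space n j i L = module.span escale (slow_shift n j i ` (L - {0}))"

end

theory Submission
  imports Defs
begin

text \<open>Write \<open>a = min I\<close> and \<open>J = I - {a}\<close>. For \<open>j \<in> J\<close> decompose \<open>m = x + e\<^sub>j \<and> y\<close>
  with \<open>x, y\<close> free of \<open>e\<^sub>j\<close>. If \<open>N\<^sub>j\<^sub>\<rightarrow>\<^sub>a\<close> preserves \<open>L\<close>, then \<open>e\<^sub>j \<and> y \<in> L\<close>: either the shift
  of \<open>m\<close> is already \<open>e\<^sub>j \<and> y\<close>, or it is \<open>x + e\<^sub>a \<and> y\<close> and the shift of the difference
  \<open>e\<^sub>j \<and> y - e\<^sub>a \<and> y\<close> is \<open>e\<^sub>j \<and> y\<close>. Hence \<open>L\<close> is stable under the coordinate projections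
  "monomials with (without) \<open>e\<^sub>j\<close>", and so under the projections onto monomials \<open>e\<^sub>U\<close> with a
  prescribed trace \<open>U \<inter> J = T\<close>. These projections sum to the identity, so \<open>L\<close> has a basis of
  elements each supported on one trace \<open>T\<close>, and such an element factors as \<open>x \<and> e\<^sub>T\<close> with \<open>x\<close>
  free of the variables in \<open>J\<close>.\<close>

interpretation E: vector_space "escale :: 'a::field \<Rightarrow> 'a ext \<Rightarrow> 'a ext"
  by unfold_locales (auto simp: escale_def fun_eq_iff algebra_simps)

definition ext_proj :: "(nat set \<Rightarrow> bool) \<Rightarrow> ('a::field) ext \<Rightarrow> 'a ext" where
  "ext_proj P m = (\<lambda>U. if P U then m U else 0)"

lemma sum_fun_apply: "(\<Sum>x\<in>A. f x) U = (\<Sum>x\<in>A. f x U :: 'b::comm_monoid_add)"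
  by (induct A rule: infinite_finite_induct) simp_all

lemma wsign_square: "wsign A B * wsign A B = (1::'a::field)"
  unfolding wsign_def by (simp add: power_mult_distrib[symmetric])

lemma wsign_nonzero: "wsign A B \<noteq> (0::'a::field)"
  using wsign_square[of A B] by (metis mult_zero_left zero_neq_one)

lemma wedge_emono_left:
  "wedge (emono A) y U = (if finite U \<and> A \<subseteq> U then wsign A (U - A) * y (U - A) else (0::'a::field))"
proof (cases "finite U")
  case True
  have "(\<Sum>S\<in>Pow U. wsign S (U - S) * emono A S * y (U - S)) =
        (\<Sum>S\<in>Pow U. if S = A then wsign A (U - A) * y (U - A) else (0::'a))"
    by (rule sum.cong) (auto simp: emono_def)
  also have "\<dots> = (if A \<subseteq> U then wsign A (U - A) * y (U - A) else 0)"
    using True by (simp add: sum.delta)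
  finally show ?thesis using True by (simp add: wedge_def)
qed (simp add: wedge_def)

lemma wedge_emono_right:
  "wedge x (emono T) U = (if finite U \<and> T \<subseteq> U then wsign (U - T) T * x (U - T) else (0::'a::field))"
proof (cases "finite U")
  case True
  have "(\<Sum>S\<in>Pow U. wsign S (U - S) * x S * emono T (U - S)) =
        (\<Sum>S\<in>Pow U. if S = U - T then (if T \<subseteq> U then wsign (U - T) T * x (U - T) else 0) else (0::'a))"
  proof (rule sum.cong)
    fix S assume "S \<in> Pow U"
    then have "U - S = T \<longleftrightarrow> S = U - T \<and> T \<subseteq> U" by auto
    then show "wsign S (U - S) * x S * emono T (U - S) =
      (if S = U - T then (if T \<subseteq> U then wsign (U - T) T * x (U - T) else 0) else (0::'a))"
      by (auto simp: emono_def)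
  qed simp
  also have "\<dots> = (if T \<subseteq> U then wsign (U - T) T * x (U - T) else 0)"
    using True by (simp add: sum.delta)
  finally show ?thesis using True by (simp add: wedge_def)
qed (simp add: wedge_def)

lemma wedge_zero_right [simp]: "wedge x (0::('a::field) ext) = 0"
  by (simp add: wedge_def fun_eq_iff)

lemma ext_alg_support: "f \<in> ext_alg n J \<Longrightarrow> f U \<noteq> 0 \<Longrightarrow> finite U \<and> U \<subseteq> {1..n} - J"
  unfolding ext_alg_def by (auto intro: finite_subset)

lemma zero_mem_ext_alg [simp]: "0 \<in> ext_alg n J"
  by (simp add: ext_alg_def)

lemma uminus_mem_ext_alg: "f \<in> ext_alg n J \<Longrightarrow> - f \<in> ext_alg n J"
  by (simp add: ext_alg_def)

lemma wedge_emono_mem_ext_alg: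
  fixes y :: "('a::field) ext"
  assumes "y \<in> ext_alg n {j}" "i \<in> {1..n}" "i \<noteq> j"
  shows "wedge (emono {i}) y \<in> ext_alg n {j}"
  unfolding ext_alg_def
proof (intro CollectI allI impI)
  fix S assume "wedge (emono {i}) y S \<noteq> 0"
  then have "i \<in> S" and "y (S - {i}) \<noteq> 0" by (auto simp: wedge_emono_left split: if_splits)
  with assms show "S \<subseteq> {1..n} - {j}" unfolding ext_alg_def by blast
qed

lemma wedge_emono_decomp_unique:
  fixes x1 :: "('a::field) ext"
  assumes "x1 \<in> ext_alg n {j}" "y1 \<in> ext_alg n {j}" "x2 \<in> ext_alg n {j}" "y2 \<in> ext_alg n {j}"
    and eq: "x1 + wedge (emono {j}) y1 = x2 + wedge (emono {j}) y2"
  shows "x1 = x2 \<and> y1 = y2"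
proof
  show "x1 = x2"
  proof
    fix U
    show "x1 U = x2 U"
    proof (cases "j \<in> U")
      case True
      then show ?thesis using assms ext_alg_support by (metis Diff_iff insertI1 subsetD)
    next
      case False
      then show ?thesis using fun_cong[OF eq, of U] by (simp add: wedge_emono_left)
    qed
  qed
  show "y1 = y2"
  proof
    fix R
    show "y1 R = y2 R"
    proof (cases "j \<notin> R \<and> finite R")
      case False
      then show ?thesis using assms ext_alg_support by (metis Diff_iff insertI1 subsetD)
    next
      case True
      have "x1 (insert j R) = 0" "x2 (insert j R) = 0"
        using assms ext_alg_support by (metis Diff_iff insertI1 subsetD)+
      then have "wsign {j} R * y1 R = wsign {j} R * y2 R"
        using True fun_cong[OF eq, of "insert j R"] by (simp add: wedge_emono_left)
      then show ?thesis using wsign_nonzero by auto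
    qed
  qed
qed

lemma wedge_emono_decomp_eq_zero:
  fixes x :: "('a::field) ext"
  assumes "x \<in> ext_alg n {j}" "y \<in> ext_alg n {j}" "x + wedge (emono {j}) y = 0"
  shows "y = 0"
  using wedge_emono_decomp_unique[OF assms(1,2) zero_mem_ext_alg zero_mem_ext_alg] assms(3) by simp

lemma slow_split_eq:
  fixes x :: "('a::field) ext"
  assumes "x \<in> ext_alg n {j}" "y \<in> ext_alg n {j}"
  shows "slow_split n j (x + wedge (emono {j}) y) = (x, y)"
  unfolding slow_split_def
proof (rule the_equality)
  fix p assume "case p of (x', y') \<Rightarrow> x' \<in> ext_alg n {j} \<and> y' \<in> ext_alg n {j} \<and>
      x + wedge (emono {j}) y = x' + wedge (emono {j}) y'"
  then show "p = (x, y)" using wedge_emono_decomp_unique[OF assms] by (cases p) fastforce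
qed (use assms in simp)

lemma slow_shift_eq:
  fixes x :: "('a::field) ext"
  assumes "x \<in> ext_alg n {j}" "y \<in> ext_alg n {j}"
  shows "slow_shift n j i (x + wedge (emono {j}) y) =
    (if x + wedge (emono {i}) y \<noteq> 0 then x + wedge (emono {i}) y else wedge (emono {j}) y)"
  by (simp add: slow_shift_def slow_split_eq[OF assms])

lemma ext_alg_decomp:
  fixes m :: "('a::field) ext"
  assumes m: "m \<in> ext_alg n {}"
  obtains y where "ext_proj (\<lambda>U. j \<notin> U) m \<in> ext_alg n {j}" "y \<in> ext_alg n {j}"
    "m = ext_proj (\<lambda>U. j \<notin> U) m + wedge (emono {j}) y"
proof
  define y where "y = (\<lambda>R. if j \<notin> R then wsign {j} R * m (insert j R) else 0)"
  show "ext_proj (\<lambda>U. j \<notin> U) m \<in> ext_alg n {j}"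
    using m unfolding ext_alg_def ext_proj_def by auto
  show "y \<in> ext_alg n {j}"
    using m unfolding ext_alg_def y_def by (auto split: if_splits)
  show "m = ext_proj (\<lambda>U. j \<notin> U) m + wedge (emono {j}) y"
  proof
    fix U
    show "m U = (ext_proj (\<lambda>U. j \<notin> U) m + wedge (emono {j}) y) U"
    proof (cases "j \<in> U \<and> finite U")
      case True
      then have "insert j (U - {j}) = U" by auto
      then show ?thesis using True
        by (simp add: ext_proj_def wedge_emono_left y_def mult.assoc[symmetric] wsign_square)
    next
      case False
      moreover have "\<not> finite U \<Longrightarrow> m U = 0" using m ext_alg_support by blast
      ultimately show ?thesis by (auto simp: ext_proj_def wedge_emono_left)
    qed
  qed
qed

lemma wedge_emono_mem_if_slow_shift_closed:
  fixes L :: "('a::field) ext set"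
  assumes L: "E.subspace L" and i: "i \<in> {1..n}" "i \<noteq> j"
    and shift: "\<And>m. m \<in> L \<Longrightarrow> m \<noteq> 0 \<Longrightarrow> slow_shift n j i m \<in> L"
    and x: "x \<in> ext_alg n {j}" and y: "y \<in> ext_alg n {j}"
    and m: "x + wedge (emono {j}) y \<in> L"
  shows "wedge (emono {j}) y \<in> L"
proof (cases "y = 0")
  case True
  then show ?thesis using E.subspace_0[OF L] by simp
next
  case False
  then have "x + wedge (emono {j}) y \<noteq> 0" using wedge_emono_decomp_eq_zero[OF x y] by blast
  from shift[OF m this] have shifted: "slow_shift n j i (x + wedge (emono {j}) y) \<in> L" .
  show ?thesis
  proof (cases "x + wedge (emono {i}) y = 0")
    case True
    then show ?thesis using shifted by (simp add: slow_shift_eq[OF x y])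
  next
    case False
    define x' where "x' = - wedge (emono {i}) y"
    have x': "x' \<in> ext_alg n {j}"
      unfolding x'_def using uminus_mem_ext_alg wedge_emono_mem_ext_alg[OF y i] by blast
    have "x + wedge (emono {i}) y \<in> L" using shifted False by (simp add: slow_shift_eq[OF x y])
    from E.subspace_diff[OF L m this] have "x + wedge (emono {j}) y - (x + wedge (emono {i}) y) \<in> L" .
    then have "x' + wedge (emono {j}) y \<in> L"
      unfolding x'_def by (simp add: algebra_simps)
    moreover have "x' + wedge (emono {j}) y \<noteq> 0"
      using wedge_emono_decomp_eq_zero[OF x' y] \<open>y \<noteq> 0\<close> by blast
    ultimately have "slow_shift n j i (x' + wedge (emono {j}) y) \<in> L" by (rule shift)
    moreover have "x' + wedge (emono {i}) y = 0" unfolding x'_def by simp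
    ultimately show ?thesis by (simp add: slow_shift_eq[OF x' y])
  qed
qed

lemma slow_shift_mem_if_slow_shift_space_eq:
  assumes "slow_shift_space n j i L = L" "m \<in> L" "m \<noteq> 0"
  shows "slow_shift n j i m \<in> L"
proof -
  have "slow_shift n j i m \<in> E.span (slow_shift n j i ` (L - {0}))"
    using assms(2,3) by (intro E.span_base) blast
  then show ?thesis using assms(1) unfolding slow_shift_space_def by simp
qed

lemma ext_proj_not_mem_if_slow_shift_space_eq:
  fixes L :: "('a::field) ext set"
  assumes L: "E.subspace L" "L \<subseteq> ext_alg n {}" and i: "i \<in> {1..n}" "i \<noteq> j"
    and shift: "slow_shift_space n j i L = L" and m: "m \<in> L"
  shows "ext_proj (\<lambda>U. j \<notin> U) m \<in> L"
proof -
  obtain y where x: "ext_proj (\<lambda>U. j \<notin> U) m \<in> ext_alg n {j}" and y: "y \<in> ext_alg n {j}"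
    and decomp: "m = ext_proj (\<lambda>U. j \<notin> U) m + wedge (emono {j}) y"
    using ext_alg_decomp[of m n j] m L(2) by blast
  have "wedge (emono {j}) y \<in> L"
    using wedge_emono_mem_if_slow_shift_closed[OF L(1) i _ x y]
      slow_shift_mem_if_slow_shift_space_eq[OF shift] m decomp by simp
  then have "m - wedge (emono {j}) y \<in> L" using E.subspace_diff[OF L(1) m] by blast
  then show ?thesis using decomp by (metis add_diff_cancel)
qed

lemma ext_proj_trace_closed:
  fixes L :: "('a::field) ext set"
  assumes L: "E.subspace L" and K: "finite K"
    and proj: "\<And>j m. j \<in> K \<Longrightarrow> m \<in> L \<Longrightarrow> ext_proj (\<lambda>U. j \<notin> U) m \<in> L"
    and m: "m \<in> L"
  shows "ext_proj (\<lambda>U. U \<inter> K = T \<inter> K) m \<in> L"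
  using K proj
proof (induction K rule: finite_induct)
  case empty
  then show ?case using m by (simp add: ext_proj_def)
next
  case (insert j K)
  let ?m = "ext_proj (\<lambda>U. U \<inter> K = T \<inter> K) m"
  have IH: "?m \<in> L" using insert by simp
  have out: "ext_proj (\<lambda>U. j \<notin> U) ?m \<in> L" using insert.prems IH by simp
  have "ext_proj (\<lambda>U. j \<in> U) ?m = ?m - ext_proj (\<lambda>U. j \<notin> U) ?m"
    by (simp add: ext_proj_def fun_eq_iff)
  then have into: "ext_proj (\<lambda>U. j \<in> U) ?m \<in> L" using E.subspace_diff[OF L IH out] by simp
  have "\<And>U. (U \<inter> insert j K = T \<inter> insert j K) \<longleftrightarrow> (j \<in> U \<longleftrightarrow> j \<in> T) \<and> U \<inter> K = T \<inter> K"
    using insert(2) by blast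
  then have "ext_proj (\<lambda>U. U \<inter> insert j K = T \<inter> insert j K) m =
    (if j \<in> T then ext_proj (\<lambda>U. j \<in> U) ?m else ext_proj (\<lambda>U. j \<notin> U) ?m)"
    by (simp add: ext_proj_def fun_eq_iff)
  then show ?case using out into by simp
qed

lemma sum_ext_proj_trace:
  fixes m :: "('a::field) ext"
  assumes "finite J"
  shows "(\<Sum>T\<in>Pow J. ext_proj (\<lambda>U. U \<inter> J = T) m) = m"
proof
  fix U
  have "(\<Sum>T\<in>Pow J. ext_proj (\<lambda>U. U \<inter> J = T) m) U = (\<Sum>T\<in>Pow J. if U \<inter> J = T then m U else 0)"
    by (simp add: sum_fun_apply ext_proj_def)
  also have "\<dots> = m U" using assms by (simp add: sum.delta')
  finally show "(\<Sum>T\<in>Pow J. ext_proj (\<lambda>U. U \<inter> J = T) m) U = m U" .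
qed

lemma basis_of_trace_homogeneous:
  fixes L :: "('a::field) ext set"
  assumes L: "E.subspace L" and J: "finite J"
    and proj: "\<And>T m. T \<subseteq> J \<Longrightarrow> m \<in> L \<Longrightarrow> ext_proj (\<lambda>U. U \<inter> J = T) m \<in> L"
  obtains B where "B \<subseteq> L" "E.independent B" "E.span B = L"
    "\<And>b. b \<in> B \<Longrightarrow> \<exists>T \<subseteq> J. \<forall>U. b U \<noteq> 0 \<longrightarrow> U \<inter> J = T"
proof -
  define G where "G = {f \<in> L. \<exists>T \<subseteq> J. \<forall>U. f U \<noteq> 0 \<longrightarrow> U \<inter> J = T}"
  have "L \<subseteq> E.span G"
  proof
    fix m assume m: "m \<in> L"
    have "ext_proj (\<lambda>U. U \<inter> J = T) m \<in> G" if "T \<subseteq> J" for T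
      unfolding G_def using proj[OF that m] that by (auto simp: ext_proj_def)
    then have "(\<Sum>T\<in>Pow J. ext_proj (\<lambda>U. U \<inter> J = T) m) \<in> E.span G"
      by (intro E.span_sum E.span_base) simp
    then show "m \<in> E.span G" by (simp only: sum_ext_proj_trace[OF J])
  qed
  obtain B where B: "B \<subseteq> G" "E.independent B" "G \<subseteq> E.span B"
    by (rule E.maximal_independent_subset)
  have "B \<subseteq> L" using B(1) by (auto simp: G_def)
  moreover have "L \<subseteq> E.span B"
    using \<open>L \<subseteq> E.span G\<close> E.span_minimal[OF B(3) E.subspace_span] by blast
  ultimately have "E.span B = L" using E.span_subspace L by blast
  with B \<open>B \<subseteq> L\<close> show ?thesis by (intro that) (auto simp: G_def)
qed

lemma ext_deg_trace_eq_wedge: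
  fixes f :: "('a::field) ext"
  assumes f: "f \<in> ext_deg n {} k" and T: "T \<subseteq> J" and supp: "\<forall>U. f U \<noteq> 0 \<longrightarrow> U \<inter> J = T"
  shows "\<exists>x. x \<in> ext_deg n J (k - card T) \<and> f = wedge x (emono T)"
proof (intro exI conjI)
  define x where "x = (\<lambda>R. if R \<inter> J = {} then wsign R T * f (R \<union> T) else 0)"
  show "x \<in> ext_deg n J (k - card T)"
    unfolding ext_deg_def
  proof (intro CollectI allI impI)
    fix R assume "x R \<noteq> 0"
    then have RJ: "R \<inter> J = {}" and fR: "f (R \<union> T) \<noteq> 0" unfolding x_def by (auto split: if_splits)
    have "R \<union> T \<subseteq> {1..n}" "card (R \<union> T) = k" using f fR unfolding ext_deg_def by auto
    moreover have "finite R" "finite T" using calculation(1) by (auto intro: finite_subset)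
    moreover have "R \<inter> T = {}" using RJ T by blast
    ultimately show "R \<subseteq> {1..n} - J \<and> card R = k - card T"
      using RJ by (auto simp: card_Un_disjoint)
  qed
  show "f = wedge x (emono T)"
  proof
    fix U
    show "f U = wedge x (emono T) U"
    proof (cases "f U = 0")
      case False
      then have "U \<subseteq> {1..n}" "U \<inter> J = T" using f supp unfolding ext_deg_def by auto
      then have "finite U" "T \<subseteq> U" "(U - T) \<inter> J = {}" "(U - T) \<union> T = U"
        by (auto intro: finite_subset)
      then show ?thesis by (simp add: wedge_emono_right x_def mult.assoc[symmetric] wsign_square)
    next
      case True
      moreover have "T \<subseteq> U \<Longrightarrow> (U - T) \<union> T = U" by auto
      ultimately show ?thesis by (auto simp: wedge_emono_right x_def)
    qed
  qed
qed

theorem theorem3p13: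
  fixes n k :: nat and L :: "('a::field) ext set" and I :: "nat set"
  assumes char: "(2::'a) \<noteq> 0"
    and L_sub: "module.subspace escale L"
    and L_deg: "L \<subseteq> ext_deg n {} k"
    and I_sub: "I \<subseteq> {1..n}" and I_ne: "I \<noteq> {}"
    and inv: "\<And>i j. i \<in> I \<Longrightarrow> j \<in> I \<Longrightarrow> i < j \<Longrightarrow> slow_shift_space n j i L = L"
  shows "\<exists>B. B \<subseteq> L \<and> \<not> module.dependent escale B \<and> module.span escale B = L \<and>
           (\<forall>b\<in>B. \<exists>x y d S. x \<in> ext_deg n (I - {Min I}) d \<and> S \<subseteq> I \<and> y = emono S \<and>
                               b = wedge x y)"
proof -
  define J where "J = I - {Min I}"
  have finI: "finite I" using I_sub finite_subset by blast
  then have finJ: "finite J" unfolding J_def by simp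
  have a: "Min I \<in> I" using finI I_ne by simp
  then have a_n: "Min I \<in> {1..n}" using I_sub by blast
  have L_alg: "L \<subseteq> ext_alg n {}" using L_deg unfolding ext_deg_def ext_alg_def by blast
  have proj: "ext_proj (\<lambda>U. j \<notin> U) m \<in> L" if j: "j \<in> J" and m: "m \<in> L" for j m
  proof -
    have "j \<in> I" "Min I < j" using j finI unfolding J_def by (auto simp: order_less_le)
    then show ?thesis
      using ext_proj_not_mem_if_slow_shift_space_eq[OF L_sub L_alg a_n _ inv[OF a] m] by simp
  qed
  have trace: "ext_proj (\<lambda>U. U \<inter> J = T) m \<in> L" if "T \<subseteq> J" "m \<in> L" for T m
    using ext_proj_trace_closed[OF L_sub finJ proj \<open>m \<in> L\<close>, of T] that(1)
    by (simp add: Int_absorb2)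
  obtain B where B: "B \<subseteq> L" "E.independent B" "E.span B = L"
    and B_trace: "\<And>b. b \<in> B \<Longrightarrow> \<exists>T \<subseteq> J. \<forall>U. b U \<noteq> 0 \<longrightarrow> U \<inter> J = T"
    using basis_of_trace_homogeneous[OF L_sub finJ trace] by blast
  have "\<exists>x y d S. x \<in> ext_deg n J d \<and> S \<subseteq> I \<and> y = emono S \<and> b = wedge x y" if b: "b \<in> B" for b
  proof -
    obtain T where T: "T \<subseteq> J" and supp: "\<forall>U. b U \<noteq> 0 \<longrightarrow> U \<inter> J = T"
      using B_trace[OF b] by blast
    have "b \<in> ext_deg n {} k" using b B(1) L_deg by blast
    then obtain x where "x \<in> ext_deg n J (k - card T)" "b = wedge x (emono T)"
      using ext_deg_trace_eq_wedge[OF _ T supp] by blast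
    moreover have "T \<subseteq> I" using T unfolding J_def by blast
    ultimately show ?thesis by blast
  qed
  with B show ?thesis unfolding J_def by (intro exI[of _ B] conjI ballI) simp_all
qed

end
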